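(* Consider the following optical-network model. Each link $k$ has a set $A_k\subseteq\mathbb{Z}$ of available units. Each trait $t$ has a resource $\mathrm{RI}(t)$, a nonempty integer interval, and for each link $k$ the set $t\oplus k$ of derived traits satisfies: every $t'\in t\oplus k$ has $\mathrm{RI}(t')$ a maximal integer interval contained in $\mathrm{RI}(t)\cap A_k$, and for every maximal integer interval $J\subseteq \mathrm{RI}(t)\cap A_k$ there is $t'\in t\oplus k$ with $\mathrm{RI}(t')=J$. Fix a link $k$ and, for a label $l=(t_a,t_b)$ whose routes end at different nodes, let $l\oplus e=\{(t,t_b): t\in t_a\oplus k\}$, where appending $k$ makes both routes end at the same node. Let $\mathrm{cost}$ be a real-valued function on labels such that for any labels $l_i,l_j$: if $\mathrm{cost}(l_i)\le\mathrm{cost}(l_j)$ then $\mathrm{cost}(l')\le\mathrm{cost}(l)$ for all $l'\in l_i\oplus e$ and all $l\in l_j\oplus e$. Let $l_i=(t_{i,a},t_{i,b})$, $l_j=(t_{j,a},t_{j,b})$ be labels. If $l_i\preceq'_{\ne} l_j$, then for every $l\in l_j\oplus e$ there exists $l'\in l_i\oplus e$ with $l'\preceq'_{=} l$.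
   Context: A trait describes a route in an optical network with its cost and the interval of contiguous units available along it; $t\oplus k$ is the set of traits obtained by appending link $k$. A label is a pair of traits of two link-disjoint routes. For labels $l_i=(t_{i,a},t_{i,b})$, $l_j=(t_{j,a},t_{j,b})$ with routes ending at different nodes: $l_i\preceq'_{\ne} l_j$ iff $\mathrm{cost}(l_i)\le\mathrm{cost}(l_j)$, $\mathrm{RI}(t_{i,a})\supseteq\mathrm{RI}(t_{j,a})$ and $\mathrm{RI}(t_{i,b})\supseteq\mathrm{RI}(t_{j,b})$. For labels $l_i=(t_i,t'_i)$, $l_j=(t_j,t'_j)$ with both routes ending at the same node: $\mathrm{RI}(l_i)\supseteq_n\mathrm{RI}(l_j)$ iff $\mathrm{RI}(t_i)\supseteq\mathrm{RI}(t_j)$ and $\mathrm{RI}(t'_i)\supseteq\mathrm{RI}(t'_j)$; $\mathrm{RI}(l_i)\supseteq_x\mathrm{RI}(l_j)$ iff $\mathrm{RI}(t_i)\supseteq\mathrm{RI}(t'_j)$ and $\mathrm{RI}(t'_i)\supseteq\mathrm{RI}(t_j)$; $\mathrm{RI}(l_i)\supseteq_=\mathrm{RI}(l_j)$ iff one of these two holds; and $l_i\preceq'_= l_j$ iff $\mathrm{cost}(l_i)\le\mathrm{cost}(l_j)$ and $\mathrm{RI}(l_i)\supseteq_=\mathrm{RI}(l_j)$. *)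

theory Defs
  imports Complex_Main
begin

definition int_interval :: "int set \<Rightarrow> bool" where
  "int_interval J \<longleftrightarrow> (\<exists>a b. a \<le> b \<and> J = {a..b})"

definition max_int_interval :: "int set \<Rightarrow> int set \<Rightarrow> bool" where
  "max_int_interval J S \<longleftrightarrow> int_interval J \<and> J \<subseteq> S \<and>
     (\<forall>J'. int_interval J' \<and> J \<subseteq> J' \<and> J' \<subseteq> S \<longrightarrow> J' = J)"

definition label_ext :: "('t \<Rightarrow> 'k \<Rightarrow> 't set) \<Rightarrow> 'k \<Rightarrow> 't \<times> 't \<Rightarrow> ('t \<times> 't) set" where
  "label_ext ext k l = {(t, snd l) | t. t \<in> ext (fst l) k}"

definition dom_ne :: "('t \<times> 't \<Rightarrow> real) \<Rightarrow> ('t \<Rightarrow> int set) \<Rightarrow> 't \<times> 't \<Rightarrow> 't \<times> 't \<Rightarrow> bool" where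
  "dom_ne cost RI li lj \<longleftrightarrow> cost li \<le> cost lj \<and>
     RI (fst lj) \<subseteq> RI (fst li) \<and> RI (snd lj) \<subseteq> RI (snd li)"

definition RI_sup_n :: "('t \<Rightarrow> int set) \<Rightarrow> 't \<times> 't \<Rightarrow> 't \<times> 't \<Rightarrow> bool" where
  "RI_sup_n RI li lj \<longleftrightarrow> RI (fst lj) \<subseteq> RI (fst li) \<and> RI (snd lj) \<subseteq> RI (snd li)"

definition RI_sup_x :: "('t \<Rightarrow> int set) \<Rightarrow> 't \<times> 't \<Rightarrow> 't \<times> 't \<Rightarrow> bool" where
  "RI_sup_x RI li lj \<longleftrightarrow> RI (snd lj) \<subseteq> RI (fst li) \<and> RI (fst lj) \<subseteq> RI (snd li)"

definition RI_sup_eq :: "('t \<Rightarrow> int set) \<Rightarrow> 't \<times> 't \<Rightarrow> 't \<times> 't \<Rightarrow> bool" where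
  "RI_sup_eq RI li lj \<longleftrightarrow> RI_sup_n RI li lj \<or> RI_sup_x RI li lj"

definition dom_eq :: "('t \<times> 't \<Rightarrow> real) \<Rightarrow> ('t \<Rightarrow> int set) \<Rightarrow> 't \<times> 't \<Rightarrow> 't \<times> 't \<Rightarrow> bool" where
  "dom_eq cost RI li lj \<longleftrightarrow> cost li \<le> cost lj \<and> RI_sup_eq RI li lj"

end

theory Submission
  imports Defs
begin

text \<open>An extension of \<open>t_ja\<close> has as resource a maximal
  interval of \<open>RI t_ja \<inter> A k\<close>; since \<open>RI t_ja \<subseteq> RI t_ia\<close>, this is an interval inside the finite
  set \<open>RI t_ia \<inter> A k\<close>, so it lies in a maximal interval of that set, which by completeness of
  \<open>\<oplus>\<close> is the resource of some extension of \<open>t_ia\<close>. The untouched second routes keep their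
  inclusion, so the new labels are related by \<open>\<supseteq>\<^sub>n\<close>, and the cost hypothesis transfers the
  cost comparison.\<close>

lemma max_int_interval_extend:
  assumes "finite S" and "int_interval I" and "I \<subseteq> S"
  shows "\<exists>J. max_int_interval J S \<and> I \<subseteq> J"
proof -
  let ?C = "{J. int_interval J \<and> J \<subseteq> S}"
  have "finite ?C"
    using \<open>finite S\<close> by (intro finite_subset[of ?C "Pow S"]) auto
  moreover have "I \<in> ?C"
    using assms by simp
  ultimately obtain J where "J \<in> ?C" "I \<subseteq> J" and "\<forall>J'\<in>?C. J \<subseteq> J' \<longrightarrow> J = J'"
    by (metis (no_types, lifting) finite_has_maximal2)
  then show ?thesis
    unfolding max_int_interval_def by auto
qed

lemma max_int_interval_mono_set:
  assumes "max_int_interval J S" and "S \<subseteq> S'" and "finite S'"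
  shows "\<exists>J'. max_int_interval J' S' \<and> J \<subseteq> J'"
proof (rule max_int_interval_extend)
  show "int_interval J" "J \<subseteq> S'"
    using assms unfolding max_int_interval_def by auto
qed fact

lemma finite_int_interval: "int_interval J \<Longrightarrow> finite J"
  unfolding int_interval_def by auto

lemma mem_label_ext: "(t, s) \<in> label_ext ext k l \<longleftrightarrow> t \<in> ext (fst l) k \<and> s = snd l"
  unfolding label_ext_def by auto

theorem proposition5:
  fixes A :: "'k \<Rightarrow> int set"
    and RI :: "'t \<Rightarrow> int set"
    and ext :: "'t \<Rightarrow> 'k \<Rightarrow> 't set"
    and k :: 'k
    and cost :: "'t \<times> 't \<Rightarrow> real"
    and li lj :: "'t \<times> 't"
  assumes RI_int: "\<And>t. int_interval (RI t)"
    and plus_sound: "\<And>t k' t'. t' \<in> ext t k' \<Longrightarrow> max_int_interval (RI t') (RI t \<inter> A k')"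
    and plus_complete: "\<And>t k' J. max_int_interval J (RI t \<inter> A k') \<Longrightarrow> \<exists>t'\<in>ext t k'. RI t' = J"
    and cost_mono: "\<And>l1 l2. cost l1 \<le> cost l2 \<Longrightarrow>
        \<forall>l'\<in>label_ext ext k l1. \<forall>l\<in>label_ext ext k l2. cost l' \<le> cost l"
    and dom: "dom_ne cost RI li lj"
  shows "\<forall>l\<in>label_ext ext k lj. \<exists>l'\<in>label_ext ext k li. dom_eq cost RI l' l"
proof
  fix l assume l: "l \<in> label_ext ext k lj"
  then obtain t where t: "t \<in> ext (fst lj) k" and l_eq: "l = (t, snd lj)"
    by (cases l) (auto simp: mem_label_ext)
  have cost_le: "cost li \<le> cost lj" and fst_sub: "RI (fst lj) \<subseteq> RI (fst li)"
    and snd_sub: "RI (snd lj) \<subseteq> RI (snd li)"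
    using dom unfolding dom_ne_def by auto
  have "RI (fst lj) \<inter> A k \<subseteq> RI (fst li) \<inter> A k" "finite (RI (fst li) \<inter> A k)"
    using fst_sub finite_int_interval[OF RI_int] by auto
  then obtain J where J: "max_int_interval J (RI (fst li) \<inter> A k)" "RI t \<subseteq> J"
    using max_int_interval_mono_set[OF plus_sound[OF t]] by blast
  then obtain t' where t': "t' \<in> ext (fst li) k" "RI t' = J"
    using plus_complete by blast
  then have l': "(t', snd li) \<in> label_ext ext k li"
    by (simp add: mem_label_ext)
  have "cost (t', snd li) \<le> cost l"
    using cost_mono[OF cost_le] l' l by blast
  moreover have "RI_sup_n RI (t', snd li) l"
    unfolding RI_sup_n_def l_eq using J t' snd_sub by auto
  ultimately show "\<exists>l'\<in>label_ext ext k li. dom_eq cost RI l' l"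
    using l' unfolding dom_eq_def RI_sup_eq_def by blast
qed

end
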